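(* Let $r\ge4$ and $s\ge1$ be integers and consider the lexicographic product $C_r[K_s]$. If $H$ is a connected induced regular subgraph of $C_r[K_s]$ of degree $d$, then either (i) $H$ is a clique of order $d+1$, with $0\le d\le 2s-1$; or (ii) $r(d+1)/3$ is an integer, $2\le d\le 3s-1$, $H$ has order $r(d+1)/3$, and every vertex of $C_r[K_s]$ is adjacent to some vertex of $H$. Conversely, for every $d$ with $0\le d\le 2s-1$ there is a connected induced regular subgraph of degree $d$ of type (i), and for every $d$ with $2\le d\le 3s-1$ such that $r(d+1)/3$ is an integer there is a connected induced regular subgraph of degree $d$ of type (ii).
   Context: Graphs are finite and simple. $C_r$ is the cycle on $r$ vertices and $K_s$ the complete graph on $s$ vertices. The lexicographic product $G[H]$ has vertex set $V(G)\times V(H)$, with $(a,b)$ adjacent to $(a',b')$ iff $a$ is adjacent to $a'$ in $G$, or $a=a'$ and $b$ is adjacent to $b'$ in $H$. Thus $C_r[K_s]$ consists of $r$ cliques of order $s$ arranged cyclically, with all edges between cyclically consecutive cliques. A regular subgraph of degree $d$ is one in which every vertex has exactly $d$ neighbours in the subgraph. *)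

theory Defs
  imports Main
begin

text \<open>The lexicographic product C_r[K_s]: vertices (i,j) with i < r (position on the
  cycle) and j < s (position inside the clique).\<close>

definition lex_verts :: "nat \<Rightarrow> nat \<Rightarrow> (nat \<times> nat) set" where
  "lex_verts r s = {0..<r} \<times> {0..<s}"

definition lex_adj :: "nat \<Rightarrow> nat \<times> nat \<Rightarrow> nat \<times> nat \<Rightarrow> bool" where
  "lex_adj r x y \<longleftrightarrow>
     (fst y = Suc (fst x) mod r \<or> fst x = Suc (fst y) mod r) \<or>
     (fst x = fst y \<and> snd x \<noteq> snd y)"

definition induced_connected :: "nat \<Rightarrow> (nat \<times> nat) set \<Rightarrow> bool" where
  "induced_connected r S \<longleftrightarrow> S \<noteq> {} \<and>
     (\<forall>x\<in>S. \<forall>y\<in>S. (\<lambda>u v. u \<in> S \<and> v \<in> S \<and> lex_adj r u v)\<^sup>*\<^sup>* x y)"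

definition induced_regular :: "nat \<Rightarrow> (nat \<times> nat) set \<Rightarrow> nat \<Rightarrow> bool" where
  "induced_regular r S d \<longleftrightarrow> (\<forall>x\<in>S. card {y \<in> S. lex_adj r x y} = d)"

definition is_clique :: "nat \<Rightarrow> (nat \<times> nat) set \<Rightarrow> bool" where
  "is_clique r S \<longleftrightarrow> (\<forall>x\<in>S. \<forall>y\<in>S. x \<noteq> y \<longrightarrow> lex_adj r x y)"

definition dominates :: "nat \<Rightarrow> nat \<Rightarrow> (nat \<times> nat) set \<Rightarrow> bool" where
  "dominates r s S \<longleftrightarrow> (\<forall>v\<in>lex_verts r s. \<exists>u\<in>S. lex_adj r v u)"

end

theory Submission
  imports Defs "HOL-Number_Theory.Cong" "HOL-Computational_Algebra.Primes"
begin

text \<open>Write c_j for the number of vertices of H in the j-th clique ("layer") of C_r[K_s],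
  indices taken mod r. A vertex in layer j+1 is adjacent to everything else in layers j, j+1,
  j+2, so d-regularity gives c_j + c_{j+1} + c_{j+2} = d + 1 whenever layer j+1 meets H.
  If three consecutive layers meet H, comparing consecutive equations gives c_{j+3} = c_j > 0,
  so every layer meets H; summing the equations over j gives 3|H| = r(d+1), and H dominates
  because every vertex is adjacent to the whole next layer. Otherwise no three consecutive
  layers are occupied, and connectivity traps H inside two consecutive layers, which makes it
  a clique of at most 2s vertices. For the converse, the layer sizes floor((d+1+t_j)/3) with
  t_j = (j mod r) mod 3 satisfy all the equations: if 3 divides r the three consecutive t_j
  are 0, 1, 2 in some order, and otherwise 3 divides d+1 and the sizes are constant.\<close>

definition layer :: "nat \<Rightarrow> (nat \<times> nat) set \<Rightarrow> nat \<Rightarrow> (nat \<times> nat) set" where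
  "layer r S j = {y \<in> S. fst y = j mod r}"

lemma finite_subset_lex_verts: "S \<subseteq> lex_verts r s \<Longrightarrow> finite S"
  unfolding lex_verts_def by (blast intro: finite_subset finite_cartesian_product)

lemma finite_layer: "S \<subseteq> lex_verts r s \<Longrightarrow> finite (layer r S j)"
  unfolding layer_def by (simp add: finite_subset_lex_verts)

lemma card_layer_le:
  assumes "S \<subseteq> lex_verts r s"
  shows "card (layer r S j) \<le> s"
proof -
  have "layer r S j \<subseteq> {j mod r} \<times> {0..<s}"
    using assms by (auto simp: layer_def lex_verts_def)
  then have "card (layer r S j) \<le> card ({j mod r} \<times> {0..<s})"
    by (rule card_mono[rotated]) simp
  then show ?thesis by simp
qed

lemma mod_neq_add_mod:
  fixes j k r :: nat
  assumes "0 < k" "k < r"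
  shows "j mod r \<noteq> (j + k) mod r"
proof
  assume "j mod r = (j + k) mod r"
  then have "r dvd k" using mod_eq_dvd_iff_nat[of j "j + k" r] by simp
  then show False using assms by (auto dest: dvd_imp_le)
qed

lemma Suc_mod_eq_Suc_mod_iff: "Suc a mod r = Suc b mod r \<longleftrightarrow> a mod r = b mod r"
  using cong_add_rcancel_nat[of a 1 b r] by (simp add: cong_def)

lemma not_lex_adj_self: "2 \<le> r \<Longrightarrow> fst x < r \<Longrightarrow> \<not> lex_adj r x x"
  using mod_neq_add_mod[of 1 r "fst x"] by (auto simp: lex_adj_def)

lemma lex_adj_iff_layers:
  assumes x: "fst x = Suc j mod r" and y: "fst y < r"
  shows "lex_adj r x y \<longleftrightarrow>
    fst y = j mod r \<or> fst y = Suc (Suc j) mod r \<or> (fst y = Suc j mod r \<and> y \<noteq> x)"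
proof -
  have next_layer: "Suc (fst x) mod r = Suc (Suc j) mod r"
    using x by (metis mod_Suc_eq)
  have "Suc (fst y) mod r = Suc j mod r \<longleftrightarrow> fst y = j mod r"
    using y by (simp add: Suc_mod_eq_Suc_mod_iff)
  then have prev_layer: "fst x = Suc (fst y) mod r \<longleftrightarrow> fst y = j mod r"
    unfolding x by (rule eq_commute[THEN trans])
  have same_layer: "fst x = fst y \<and> snd x \<noteq> snd y \<longleftrightarrow> fst y = Suc j mod r \<and> y \<noteq> x"
    using x by (cases x, cases y) auto
  show ?thesis
    unfolding lex_adj_def next_layer prev_layer same_layer by blast
qed

lemma card_neighbours_eq_layers:
  assumes r: "3 \<le> r" and S: "S \<subseteq> lex_verts r s" and x: "x \<in> S" "fst x = Suc j mod r"
  shows "card {y \<in> S. lex_adj r x y} + 1 =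
    card (layer r S j) + card (layer r S (Suc j)) + card (layer r S (Suc (Suc j)))"
proof -
  have "y \<in> insert x {y \<in> S. lex_adj r x y} \<longleftrightarrow>
      y \<in> layer r S j \<union> layer r S (Suc j) \<union> layer r S (Suc (Suc j))" for y
  proof (cases "y \<in> S")
    case True
    then have "fst y < r" using S by (auto simp: lex_verts_def)
    from lex_adj_iff_layers[OF x(2) this] show ?thesis using True x by (auto simp: layer_def)
  qed (use x in \<open>auto simp: layer_def\<close>)
  then have nbrs: "insert x {y \<in> S. lex_adj r x y} =
      layer r S j \<union> layer r S (Suc j) \<union> layer r S (Suc (Suc j))"
    by blast
  have "x \<notin> {y \<in> S. lex_adj r x y}"
    using not_lex_adj_self[of r x] r x S by (auto simp: lex_verts_def)
  moreover have "finite {y \<in> S. lex_adj r x y}"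
    using finite_subset_lex_verts[OF S] by simp
  ultimately have "card {y \<in> S. lex_adj r x y} + 1 = card (insert x {y \<in> S. lex_adj r x y})"
    by simp
  also have "\<dots> = card (layer r S j) + card (layer r S (Suc j)) + card (layer r S (Suc (Suc j)))"
  proof -
    have "j mod r \<noteq> Suc j mod r" "j mod r \<noteq> Suc (Suc j) mod r" "Suc j mod r \<noteq> Suc (Suc j) mod r"
      using mod_neq_add_mod[of 1 r j] mod_neq_add_mod[of 2 r j] mod_neq_add_mod[of 1 r "Suc j"] r
      by simp_all
    then have "layer r S j \<inter> layer r S (Suc j) = {}"
      "(layer r S j \<union> layer r S (Suc j)) \<inter> layer r S (Suc (Suc j)) = {}"
      by (auto simp: layer_def)
    then show ?thesis
      unfolding nbrs using finite_layer[OF S] by (simp add: card_Un_disjoint)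
  qed
  finally show ?thesis .
qed

lemma layer_sum_if_induced_regular:
  assumes r: "3 \<le> r" and S: "S \<subseteq> lex_verts r s" and reg: "induced_regular r S d"
    and "layer r S (Suc j) \<noteq> {}"
  shows "card (layer r S j) + card (layer r S (Suc j)) + card (layer r S (Suc (Suc j))) = d + 1"
proof -
  obtain x where x: "x \<in> S" "fst x = Suc j mod r"
    using assms(4) by (auto simp: layer_def)
  then have "card {y \<in> S. lex_adj r x y} = d"
    using reg unfolding induced_regular_def by blast
  then show ?thesis
    using card_neighbours_eq_layers[OF r S x] by simp
qed

lemma induced_regular_if_layer_sums:
  assumes r: "3 \<le> r" and S: "S \<subseteq> lex_verts r s"
    and sums: "\<And>j. card (layer r S j) + card (layer r S (Suc j)) + card (layer r S (Suc (Suc j))) = d + 1"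
  shows "induced_regular r S d"
  unfolding induced_regular_def
proof
  fix x assume x: "x \<in> S"
  then have "fst x = Suc (fst x + r - 1) mod r"
    using r S by (auto simp: lex_verts_def)
  from card_neighbours_eq_layers[OF r S x this] sums[of "fst x + r - 1"]
  show "card {y \<in> S. lex_adj r x y} = d" by simp
qed

lemma card_eq_sum_card_layer:
  assumes S: "S \<subseteq> lex_verts r s"
  shows "card S = (\<Sum>j<r. card (layer r S j))"
proof -
  have "S = (\<Union>j<r. layer r S j)"
    using S by (auto simp: layer_def lex_verts_def)
  then have "card S = card (\<Union>j<r. layer r S j)" by simp
  also have "\<dots> = (\<Sum>j<r. card (layer r S j))"
    by (rule card_UN_disjoint) (auto simp: layer_def finite_subset_lex_verts[OF S])
  finally show ?thesis .
qed

lemma sum_periodic_shift: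
  fixes f :: "nat \<Rightarrow> 'a::comm_monoid_add"
  assumes periodic: "\<And>j. f (j + r) = f j"
  shows "(\<Sum>j<r. f (j + k)) = (\<Sum>j<r. f j)"
proof (induction k)
  case (Suc k)
  have "(\<Sum>j<r. f (Suc j + k)) = (\<Sum>j<r. f (j + k))"
  proof (cases r)
    case (Suc n)
    have "(\<Sum>j<Suc n. f (Suc j + k)) = (\<Sum>j<n. f (Suc j + k)) + f (r + k)"
      using Suc by simp
    also have "\<dots> = f (0 + k) + (\<Sum>j<n. f (Suc j + k))"
      using periodic[of k] by (simp add: add.commute)
    also have "\<dots> = (\<Sum>j<Suc n. f (j + k))"
      by (rule sum.lessThan_Suc_shift[symmetric])
    finally show ?thesis using Suc by simp
  qed simp
  then show ?case using Suc.IH by simp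
qed simp

lemma three_mul_card_eq:
  assumes S: "S \<subseteq> lex_verts r s"
    and sums: "\<And>j. card (layer r S j) + card (layer r S (Suc j)) + card (layer r S (Suc (Suc j))) = d + 1"
  shows "3 * card S = r * (d + 1)"
proof -
  define c where "c j = card (layer r S j)" for j
  have periodic: "c (j + r) = c j" for j
    by (simp add: c_def layer_def)
  have "r * (d + 1) = (\<Sum>j<r. c (j + 0) + c (j + 1) + c (j + 2))"
    using sums by (simp add: c_def)
  also have "\<dots> = (\<Sum>j<r. c (j + 0)) + (\<Sum>j<r. c (j + 1)) + (\<Sum>j<r. c (j + 2))"
    by (simp only: sum.distrib)
  also have "\<dots> = 3 * (\<Sum>j<r. c j)"
    unfolding sum_periodic_shift[of c, OF periodic] by simp
  also have "\<dots> = 3 * card S"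
    using card_eq_sum_card_layer[OF S] by (simp add: c_def)
  finally show ?thesis by simp
qed

lemma layers_nonempty_if_three_consecutive:
  assumes r: "3 \<le> r" and S: "S \<subseteq> lex_verts r s" and reg: "induced_regular r S d"
    and three: "layer r S j \<noteq> {}" "layer r S (Suc j) \<noteq> {}" "layer r S (Suc (Suc j)) \<noteq> {}"
  shows "layer r S k \<noteq> {}"
proof -
  have "layer r S (j + n) \<noteq> {} \<and> layer r S (Suc (j + n)) \<noteq> {} \<and> layer r S (Suc (Suc (j + n))) \<noteq> {}" for n
  proof (induction n)
    case (Suc n)
    let ?c = "\<lambda>i. card (layer r S i)"
    have "?c (j + n) + ?c (Suc (j + n)) + ?c (Suc (Suc (j + n))) = d + 1"
      "?c (Suc (j + n)) + ?c (Suc (Suc (j + n))) + ?c (Suc (Suc (Suc (j + n)))) = d + 1"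
      using layer_sum_if_induced_regular[OF r S reg] Suc.IH by blast+
    moreover have "?c (j + n) \<noteq> 0"
      using Suc.IH finite_layer[OF S] by simp
    ultimately have "?c (Suc (Suc (Suc (j + n)))) \<noteq> 0"
      by linarith
    then show ?case using Suc.IH by auto
  qed (use three in simp)
  moreover obtain n where "k + r * j = j + n"
    using r le_iff_add[of j "k + r * j"] by (auto simp: trans_le_add2)
  moreover have "layer r S (k + r * j) = layer r S k"
    by (simp add: layer_def)
  ultimately show ?thesis by metis
qed

lemma induced_connected_invariant:
  assumes "induced_connected r S" "x \<in> S" "P x" "y \<in> S"
    and step: "\<And>y z. y \<in> S \<Longrightarrow> z \<in> S \<Longrightarrow> lex_adj r y z \<Longrightarrow> P y \<Longrightarrow> P z"
  shows "P y"
proof -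
  have "(\<lambda>u v. u \<in> S \<and> v \<in> S \<and> lex_adj r u v)\<^sup>*\<^sup>* x y"
    using assms(1,2,4) unfolding induced_connected_def by blast
  then show ?thesis
    by (induction rule: rtranclp_induct) (use assms(3) step in blast)+
qed

text \<open>If layer j+2 is empty no edge leaves layer j+1, and if layer j+3 is empty no edge
  leaves layer j+2; either way, no edge of H leaves layers j+1 and j+2.\<close>

lemma connected_within_two_layers:
  assumes S: "S \<subseteq> lex_verts r s" and con: "induced_connected r S"
    and x: "x \<in> S" "fst x = Suc j mod r"
    and below: "layer r S j = {}"
    and above: "layer r S (Suc (Suc j)) = {} \<or> layer r S (Suc (Suc (Suc j))) = {}"
    and y: "y \<in> S"
  shows "fst y = Suc j mod r \<or> fst y = Suc (Suc j) mod r"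
  using con x(1) _ y
proof (rule induced_connected_invariant)
  show "fst x = Suc j mod r \<or> fst x = Suc (Suc j) mod r" using x(2) ..
  fix y z
  assume y: "y \<in> S" and z: "z \<in> S" "lex_adj r y z"
    and y_layer: "fst y = Suc j mod r \<or> fst y = Suc (Suc j) mod r"
  have z_lt: "fst z < r" using S z by (auto simp: lex_verts_def)
  from y_layer show "fst z = Suc j mod r \<or> fst z = Suc (Suc j) mod r"
  proof
    assume "fst y = Suc j mod r"
    moreover have "z \<notin> layer r S j"
      using below by simp
    then have "fst z \<noteq> j mod r"
      using z by (simp add: layer_def)
    ultimately show ?thesis
      using lex_adj_iff_layers[of y j r z] z_lt z by blast
  next
    assume y_upper: "fst y = Suc (Suc j) mod r"
    then have "y \<in> layer r S (Suc (Suc j))"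
      using y by (simp add: layer_def)
    then have "z \<notin> layer r S (Suc (Suc (Suc j)))"
      using above by auto
    then have "fst z \<noteq> Suc (Suc (Suc j)) mod r"
      using z by (simp add: layer_def)
    then show ?thesis
      using lex_adj_iff_layers[of y "Suc j" r z] y_upper z_lt z by blast
  qed
qed

lemma is_clique_within_two_layers:
  assumes "\<And>y. y \<in> S \<Longrightarrow> fst y = i \<or> fst y = Suc i mod r"
  shows "is_clique r S"
  unfolding is_clique_def
proof (intro ballI impI)
  fix y z assume "y \<in> S" "z \<in> S" and yz: "y \<noteq> z"
  then have "fst y = i \<or> fst y = Suc i mod r" "fst z = i \<or> fst z = Suc i mod r"
    using assms by blast+
  with yz show "lex_adj r y z"
    by (elim disjE) (auto simp: lex_adj_def prod_eq_iff)
qed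

lemma card_within_two_layers:
  assumes S: "S \<subseteq> lex_verts r s" and two: "\<And>y. y \<in> S \<Longrightarrow> fst y = i \<or> fst y = i'"
  shows "card S \<le> 2 * s"
proof -
  have "S \<subseteq> {i, i'} \<times> {0..<s}"
  proof
    fix y assume "y \<in> S"
    with two[of y] S show "y \<in> {i, i'} \<times> {0..<s}"
      by (cases y) (auto simp: lex_verts_def)
  qed
  then have "card S \<le> card ({i, i'} \<times> {0..<s})"
    by (rule card_mono[rotated]) simp
  also have "\<dots> \<le> 2 * s"
    by (cases "i = i'") (simp_all add: card_cartesian_product)
  finally show ?thesis .
qed

lemma induced_connected_if_clique:
  assumes "S \<noteq> {}" and clique: "is_clique r S"
  shows "induced_connected r S"
  unfolding induced_connected_def
proof (intro conjI ballI)
  fix x y assume "x \<in> S" "y \<in> S"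
  with clique show "(\<lambda>u v. u \<in> S \<and> v \<in> S \<and> lex_adj r u v)\<^sup>*\<^sup>* x y"
    by (cases "x = y") (auto simp: is_clique_def)
qed (rule assms(1))

lemma induced_regular_if_clique:
  assumes r: "2 \<le> r" and S: "S \<subseteq> lex_verts r s" and clique: "is_clique r S"
  shows "induced_regular r S (card S - 1)"
  unfolding induced_regular_def
proof
  fix x assume x: "x \<in> S"
  have "\<not> lex_adj r x x"
    using not_lex_adj_self[OF r] S x by (auto simp: lex_verts_def)
  then have "{y \<in> S. lex_adj r x y} = S - {x}"
    using clique x unfolding is_clique_def by auto
  then show "card {y \<in> S. lex_adj r x y} = card S - 1"
    using x finite_subset_lex_verts[OF S] by simp
qed

lemma bounded_window_if_empty_layer:
  assumes r: "3 \<le> r" and S: "S \<subseteq> lex_verts r s" and reg: "induced_regular r S d"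
    and empty: "layer r S k = {}" and x: "x \<in> S"
  obtains j where "layer r S (Suc j) \<noteq> {}" "layer r S j = {}"
    "layer r S (Suc (Suc j)) = {} \<or> layer r S (Suc (Suc (Suc j))) = {}"
proof -
  have no_three: "layer r S j = {} \<or> layer r S (Suc j) = {} \<or> layer r S (Suc (Suc j)) = {}" for j
    using layers_nonempty_if_three_consecutive[OF r S reg] empty by blast
  \<comment> \<open>x lies in layer m + 2; adding r avoids truncated subtraction\<close>
  define m where "m = fst x + r - 2"
  have "fst x < r"
    using x S by (auto simp: lex_verts_def)
  moreover have "Suc (Suc m) = fst x + r"
    using r by (simp add: m_def)
  ultimately have "fst x = Suc (Suc m) mod r"
    by simp
  with x have "x \<in> layer r S (Suc (Suc m))"
    by (simp add: layer_def)
  then have x_layer: "layer r S (Suc (Suc m)) \<noteq> {}"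
    by blast
  show thesis
  proof (cases "layer r S (Suc (Suc (Suc m))) = {}")
    case True
    show thesis
    proof (cases "layer r S (Suc m) = {}")
      case True
      with \<open>layer r S (Suc (Suc (Suc m))) = {}\<close> x_layer show thesis
        by (intro that[of "Suc m"]) simp_all
    next
      case False
      with True x_layer no_three[of m] show thesis
        by (intro that[of m]) simp_all
    qed
  next
    case False
    with x_layer no_three[of "Suc m"] no_three[of "Suc (Suc m)"] show thesis
      by (intro that[of "Suc m"]) simp_all
  qed
qed

lemma within_two_layers_if_empty_layer:
  assumes r: "3 \<le> r" and S: "S \<subseteq> lex_verts r s" and con: "induced_connected r S"
    and reg: "induced_regular r S d" and empty: "layer r S k = {}"
  obtains i where "\<And>y. y \<in> S \<Longrightarrow> fst y = i \<or> fst y = Suc i mod r"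
proof -
  obtain x where "x \<in> S"
    using con unfolding induced_connected_def by blast
  then obtain j where "layer r S (Suc j) \<noteq> {}" and below: "layer r S j = {}"
    and above: "layer r S (Suc (Suc j)) = {} \<or> layer r S (Suc (Suc (Suc j))) = {}"
    using bounded_window_if_empty_layer[OF r S reg empty] by blast
  then obtain x0 where "x0 \<in> S" "fst x0 = Suc j mod r"
    by (auto simp: layer_def)
  from connected_within_two_layers[OF S con this below above]
  have "fst y = Suc j mod r \<or> fst y = Suc (Suc j mod r) mod r" if "y \<in> S" for y
    using that by (simp add: mod_Suc_eq)
  then show thesis by (rule that)
qed

lemma clique_if_empty_layer:
  assumes r: "3 \<le> r" and S: "S \<subseteq> lex_verts r s" and con: "induced_connected r S"
    and reg: "induced_regular r S d" and empty: "layer r S k = {}"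
  shows "is_clique r S \<and> card S = d + 1 \<and> d + 1 \<le> 2 * s"
proof -
  obtain i where two: "\<And>y. y \<in> S \<Longrightarrow> fst y = i \<or> fst y = Suc i mod r"
    using within_two_layers_if_empty_layer[OF assms] by blast
  then have clique: "is_clique r S"
    by (rule is_clique_within_two_layers)
  obtain x where x: "x \<in> S"
    using con unfolding induced_connected_def by blast
  have "2 \<le> r" using r by simp
  then have "card {y \<in> S. lex_adj r x y} = card S - 1"
    using x induced_regular_if_clique[OF _ S clique] unfolding induced_regular_def by blast
  moreover have "card {y \<in> S. lex_adj r x y} = d"
    using x reg unfolding induced_regular_def by blast
  moreover have "card S \<noteq> 0"
    using x finite_subset_lex_verts[OF S] by auto
  ultimately have "card S = d + 1" by simp
  with clique card_within_two_layers[OF S two] show ?thesis by simp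
qed

lemma dominates_if_layers_nonempty:
  assumes "\<And>j. layer r S j \<noteq> {}"
  shows "dominates r s S"
  unfolding dominates_def
proof
  fix v :: "nat \<times> nat"
  obtain u where "u \<in> S" "fst u = Suc (fst v) mod r"
    using assms[of "Suc (fst v)"] by (auto simp: layer_def)
  then show "\<exists>u\<in>S. lex_adj r v u"
    by (auto simp: lex_adj_def)
qed

lemma induced_connected_if_layers_nonempty:
  assumes S: "S \<subseteq> lex_verts r s" and occupied: "\<And>j. layer r S j \<noteq> {}"
  shows "induced_connected r S"
proof -
  let ?R = "\<lambda>u v. u \<in> S \<and> v \<in> S \<and> lex_adj r u v"
  have walk: "\<exists>y \<in> layer r S (fst x + n). ?R\<^sup>*\<^sup>* x y" if x: "x \<in> S" for x n
  proof (induction n)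
    case 0
    have "x \<in> layer r S (fst x)"
      using x S by (auto simp: layer_def lex_verts_def)
    then show ?case by auto
  next
    case (Suc n)
    then obtain y where y: "y \<in> layer r S (fst x + n)" "?R\<^sup>*\<^sup>* x y" ..
    obtain z where z: "z \<in> layer r S (Suc (fst x + n))"
      using occupied by blast
    have "fst z = Suc (fst y) mod r"
      using y(1) z by (simp add: layer_def mod_Suc_eq)
    then have "?R y z"
      using y(1) z by (simp add: layer_def lex_adj_def)
    with y(2) z show ?case
      by (auto intro: rtranclp.rtrancl_into_rtrancl)
  qed
  show ?thesis
    unfolding induced_connected_def
  proof (intro conjI ballI)
    show "S \<noteq> {}"
      using occupied[of 0] by (auto simp: layer_def)
    fix x y assume x: "x \<in> S" and y: "y \<in> S"
    obtain y' where y': "y' \<in> layer r S (fst x + (r - fst x + fst y))" "?R\<^sup>*\<^sup>* x y'"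
      using walk[OF x] by blast
    have "fst x < r" "fst y < r"
      using x y S by (auto simp: lex_verts_def)
    then have "fst y' = fst y"
      using y' by (simp add: layer_def)
    then have "y' = y \<or> ?R y' y"
      using y' y by (auto simp: layer_def lex_adj_def prod_eq_iff)
    with y'(2) show "?R\<^sup>*\<^sup>* x y"
      by (auto intro: rtranclp.rtrancl_into_rtrancl)
  qed
qed

lemma connected_regular_cases:
  assumes r: "3 \<le> r" and S: "S \<subseteq> lex_verts r s" and con: "induced_connected r S"
    and reg: "induced_regular r S d"
  shows "(is_clique r S \<and> card S = d + 1 \<and> d + 1 \<le> 2 * s)
    \<or> (3 dvd r * (d + 1) \<and> 2 \<le> d \<and> d + 1 \<le> 3 * s \<and>
       card S = r * (d + 1) div 3 \<and> dominates r s S)"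
proof (cases "\<forall>j. layer r S j \<noteq> {}")
  case True
  have sums: "card (layer r S j) + card (layer r S (Suc j)) + card (layer r S (Suc (Suc j))) = d + 1"
    for j using layer_sum_if_induced_regular[OF r S reg] True by blast
  have pos: "0 < card (layer r S j)" for j
    using True finite_layer[OF S] by (simp add: card_gt_0_iff)
  have card: "3 * card S = r * (d + 1)"
    using three_mul_card_eq[OF S sums] .
  then have "3 dvd r * (d + 1)"
    by (metis dvd_triv_left)
  moreover have "card S = r * (d + 1) div 3"
    using card by simp
  moreover have "2 \<le> d"
    using sums[of 0] pos[of 0] pos[of "Suc 0"] pos[of "Suc (Suc 0)"] by linarith
  moreover have "d + 1 \<le> 3 * s"
    using sums[of 0] card_layer_le[OF S, of 0] card_layer_le[OF S, of "Suc 0"]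
      card_layer_le[OF S, of "Suc (Suc 0)"] by linarith
  ultimately show ?thesis
    using dominates_if_layers_nonempty True by blast
next
  case False
  then show ?thesis
    using clique_if_empty_layer[OF r S con reg] by blast
qed

lemma exists_clique:
  assumes r: "2 \<le> r" and d: "d + 1 \<le> 2 * s"
  shows "\<exists>S. S \<subseteq> lex_verts r s \<and> induced_connected r S \<and> induced_regular r S d \<and>
    is_clique r S \<and> card S = d + 1"
proof -
  define S where "S = {0::nat} \<times> {0..<min s (d + 1)} \<union> {1} \<times> {0..<d + 1 - s}"
  have S_sub: "S \<subseteq> lex_verts r s"
    using r d by (auto simp: S_def lex_verts_def)
  have card: "card S = d + 1"
    unfolding S_def by (subst card_Un_disjoint) auto
  have clique: "is_clique r S"
    using r by (intro is_clique_within_two_layers[of S 0]) (auto simp: S_def)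
  have "S \<noteq> {}"
    using card by auto
  with S_sub clique card induced_connected_if_clique induced_regular_if_clique[OF r S_sub clique]
  show ?thesis by auto
qed

lemma div_three_sum_consecutive_residues:
  "(n + j mod 3) div 3 + (n + Suc j mod 3) div 3 + (n + Suc (Suc j) mod 3) div 3 = (n::nat)"
proof -
  have "j mod 3 = 0 \<or> j mod 3 = 1 \<or> j mod 3 = 2"
    by arith
  moreover have "Suc j mod 3 = Suc (j mod 3) mod 3" "Suc (Suc j) mod 3 = Suc (Suc (j mod 3)) mod 3"
    by (simp_all add: mod_Suc_eq mod_Suc_Suc_eq)
  moreover have "n div 3 + (n + 1) div 3 + (n + 2) div 3 = n"
    by presburger
  ultimately show ?thesis
    by (elim disjE) (simp_all add: ac_simps)
qed

lemma add_div_three_eq: "3 dvd (n::nat) \<Longrightarrow> t < 3 \<Longrightarrow> (n + t) div 3 = n div 3"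
  by presburger

lemma exists_periodic_layer_sizes:
  assumes d: "2 \<le> d" "d + 1 \<le> 3 * s" and dvd: "3 dvd r * (d + 1)"
  obtains g :: "nat \<Rightarrow> nat" where "\<And>j. g (j mod r) = g j" "\<And>j. 0 < g j" "\<And>j. g j \<le> s"
    "\<And>j. g j + g (Suc j) + g (Suc (Suc j)) = d + 1"
proof -
  define g where "g j = (d + 1 + j mod r mod 3) div 3" for j
  have residue: "j mod r mod 3 < 3" for j
    by simp
  have periodic: "g (j mod r) = g j" for j
    by (simp add: g_def)
  have sums: "g j + g (Suc j) + g (Suc (Suc j)) = d + 1" for j
  proof (cases "3 dvd r")
    case True
    then have "g i = (d + 1 + i mod 3) div 3" for i
      by (simp add: g_def mod_mod_cancel)
    then show ?thesis
      using div_three_sum_consecutive_residues[of "d + 1" j] by simp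
  next
    case False
    then have "3 dvd d + 1"
      using dvd prime_dvd_mult_iff[of 3 r "d + 1"] by simp
    then have "g i = (d + 1) div 3" for i
      unfolding g_def using residue by (rule add_div_three_eq)
    moreover have "3 * ((d + 1) div 3) = d + 1"
      using \<open>3 dvd d + 1\<close> by simp
    ultimately show ?thesis
      by simp
  qed
  have pos: "0 < g j" for j
    unfolding g_def using d(1) by simp
  have le: "g j \<le> s" for j
    unfolding g_def using d(2) residue[of j] div_less_iff_less_mult[of 3 "d + 1 + j mod r mod 3" "Suc s"]
    by simp
  from that[OF periodic pos le sums] show thesis .
qed

lemma exists_regular_with_layer_sizes:
  assumes r: "3 \<le> r" and periodic: "\<And>j. g (j mod r) = g j"
    and pos: "\<And>j. 0 < g j" and le: "\<And>j. g j \<le> s"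
    and sums: "\<And>j. g j + g (Suc j) + g (Suc (Suc j)) = d + 1"
  shows "\<exists>S. S \<subseteq> lex_verts r s \<and> induced_connected r S \<and> induced_regular r S d \<and>
    card S = r * (d + 1) div 3 \<and> dominates r s S"
proof -
  define S where "S = {(i, k). i < r \<and> k < g i}"
  have S_sub: "S \<subseteq> lex_verts r s"
    by (auto simp: S_def lex_verts_def intro: order.strict_trans2[OF _ le])
  have "layer r S j = {j mod r} \<times> {0..<g j}" for j
    using r periodic[of j] by (auto simp: S_def layer_def)
  then have card_layer: "card (layer r S j) = g j" and occupied: "layer r S j \<noteq> {}" for j
    using pos[of j] by auto
  have reg: "induced_regular r S d"
    using induced_regular_if_layer_sums[OF r S_sub] sums by (simp add: card_layer)
  have "3 * card S = r * (d + 1)"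
    using three_mul_card_eq[OF S_sub] sums by (simp add: card_layer)
  then have "card S = r * (d + 1) div 3"
    by simp
  with S_sub reg induced_connected_if_layers_nonempty[OF S_sub occupied]
    dominates_if_layers_nonempty[OF occupied]
  show ?thesis by blast
qed

lemma exists_dominating_regular:
  assumes r: "3 \<le> r" and d: "2 \<le> d" "d + 1 \<le> 3 * s" and dvd: "3 dvd r * (d + 1)"
  shows "\<exists>S. S \<subseteq> lex_verts r s \<and> induced_connected r S \<and> induced_regular r S d \<and>
    card S = r * (d + 1) div 3 \<and> dominates r s S"
proof -
  obtain g where "\<And>j. g (j mod r) = g j" "\<And>j. 0 < g j" "\<And>j. g j \<le> s"
    "\<And>j. g j + g (Suc j) + g (Suc (Suc j)) = d + 1"
    using exists_periodic_layer_sizes[OF d dvd] by blast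
  then show ?thesis
    by (rule exists_regular_with_layer_sizes[OF r])
qed

theorem lemma6:
  fixes r s :: nat
  assumes "r \<ge> 4" and "s \<ge> 1"
  shows "(\<forall>S d. S \<subseteq> lex_verts r s \<and> induced_connected r S \<and> induced_regular r S d \<longrightarrow>
            (is_clique r S \<and> card S = d + 1 \<and> d + 1 \<le> 2 * s)
          \<or> (3 dvd r * (d + 1) \<and> 2 \<le> d \<and> d + 1 \<le> 3 * s \<and>
             card S = r * (d + 1) div 3 \<and> dominates r s S))
      \<and> (\<forall>d. d + 1 \<le> 2 * s \<longrightarrow>
            (\<exists>S. S \<subseteq> lex_verts r s \<and> induced_connected r S \<and> induced_regular r S d \<and>
                 is_clique r S \<and> card S = d + 1))
      \<and> (\<forall>d. 2 \<le> d \<and> d + 1 \<le> 3 * s \<and> 3 dvd r * (d + 1) \<longrightarrow>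
            (\<exists>S. S \<subseteq> lex_verts r s \<and> induced_connected r S \<and> induced_regular r S d \<and>
                 card S = r * (d + 1) div 3 \<and> dominates r s S))"
proof -
  have r: "3 \<le> r" "2 \<le> r"
    using assms(1) by simp_all
  show ?thesis
    by (intro conjI allI impI; (elim conjE)?)
      (rule connected_regular_cases[OF r(1)] exists_clique[OF r(2)]
        exists_dominating_regular[OF r(1)]; assumption)+
qed

end
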